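(* Fix a scenario $v$. Conditioned on $v$, on the taken box $i^*$, and on the stopping time $\tau^*$, the expected objective of Balanced Stopping with Poisson Rounding is at most $\tau^*+c_{i^*}+v_{i^*}=\tau^*+\beta_{i^*}$.
   Context: Correlated Pandora's Problem: boxes $[n]$, box $i$ has opening cost $c_i>0$ and volume $v_i\ge 0$; scenario $v=(v_1,\dots,v_n)$. Write $x_+=\max\{x,0\}$. Let $X_i:[0,\infty)\to[0,1]$, $i\in[n]$, be non-decreasing with $\sum_{i}\big(X_i(t)-X_i((t-c_i)_+)\big)\le 1$ for all $t\ge 0$ (a feasible solution of the General-Cost Convex Program). Poisson Rounding: $\bar x_i(t)=\frac1t\int_0^t\big(X_i(t')-X_i((t'-c_i)_+)\big)\,dt'$; independently for each box $i$, arrivals form a non-homogeneous Poisson process in Poisson time $\tau\ge 0$ with rate $\frac1{c_i}\bar x_i(\tau/2)$; $\alpha_i$ is the first arrival time of box $i$. Balanced Stopping: $\beta_i=c_i+v_i$, $\tau_i=\max\{\alpha_i,\beta_i\}$, $\tau^*=\min_i\tau_i$ (the stopping time), $i^*=\arg\min_i\tau_i$ (the taken box). The algorithm opens in real time, in ascending order of $\alpha_j$, exactly the boxes with $\alpha_j\le\tau^*$ (each costing $c_j$), then stops and takes box $i^*$ (or an opened box of no larger volume); its objective is $\sum_{j:\alpha_j\le\tau^*}c_j$ plus the taken volume. *)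

theory Defs
  imports "HOL-Probability.Probability"
begin

definition pos_part :: "real \<Rightarrow> real" where
  "pos_part x = max x 0"

definition gccp_feasible :: "nat \<Rightarrow> (nat \<Rightarrow> real) \<Rightarrow> (nat \<Rightarrow> real \<Rightarrow> real) \<Rightarrow> bool" where
  "gccp_feasible n c X \<longleftrightarrow>
     (\<forall>i<n. mono_on {0..} (X i) \<and> (\<forall>t\<ge>0. 0 \<le> X i t \<and> X i t \<le> 1)) \<and>
     (\<forall>t\<ge>0. (\<Sum>i<n. X i t - X i (pos_part (t - c i))) \<le> 1)"

definition xbar :: "(nat \<Rightarrow> real) \<Rightarrow> (nat \<Rightarrow> real \<Rightarrow> real) \<Rightarrow> nat \<Rightarrow> real \<Rightarrow> real" where
  "xbar c X i t = (1 / t) * integral {0..t} (\<lambda>t'. X i t' - X i (pos_part (t' - c i)))"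

definition prate :: "(nat \<Rightarrow> real) \<Rightarrow> (nat \<Rightarrow> real \<Rightarrow> real) \<Rightarrow> nat \<Rightarrow> real \<Rightarrow> real" where
  "prate c X i \<tau> = (1 / c i) * xbar c X i (\<tau> / 2)"

definition cum_rate :: "(nat \<Rightarrow> real) \<Rightarrow> (nat \<Rightarrow> real \<Rightarrow> real) \<Rightarrow> nat \<Rightarrow> real \<Rightarrow> real" where
  "cum_rate c X i \<tau> = integral {0..\<tau>} (prate c X i)"

text \<open>Balanced Stopping. First arrival times take values in [0,\<infinity>] (\<infinity> = no arrival).\<close>
definition beta :: "(nat \<Rightarrow> real) \<Rightarrow> (nat \<Rightarrow> real) \<Rightarrow> nat \<Rightarrow> real" where
  "beta c v i = c i + v i"

definition tau_box :: "(nat \<Rightarrow> real) \<Rightarrow> (nat \<Rightarrow> real) \<Rightarrow> (nat \<Rightarrow> 'a \<Rightarrow> ennreal) \<Rightarrow> nat \<Rightarrow> 'a \<Rightarrow> ennreal" where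
  "tau_box c v \<alpha> i \<omega> = max (\<alpha> i \<omega>) (ennreal (beta c v i))"

definition tau_star :: "nat \<Rightarrow> (nat \<Rightarrow> real) \<Rightarrow> (nat \<Rightarrow> real) \<Rightarrow> (nat \<Rightarrow> 'a \<Rightarrow> ennreal) \<Rightarrow> 'a \<Rightarrow> ennreal" where
  "tau_star n c v \<alpha> \<omega> = Min ((\<lambda>i. tau_box c v \<alpha> i \<omega>) ` {..<n})"

definition i_star :: "nat \<Rightarrow> (nat \<Rightarrow> real) \<Rightarrow> (nat \<Rightarrow> real) \<Rightarrow> (nat \<Rightarrow> 'a \<Rightarrow> ennreal) \<Rightarrow> 'a \<Rightarrow> nat" where
  "i_star n c v \<alpha> \<omega> = (LEAST i. i < n \<and> tau_box c v \<alpha> i \<omega> = tau_star n c v \<alpha> \<omega>)"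

definition objective :: "nat \<Rightarrow> (nat \<Rightarrow> real) \<Rightarrow> (nat \<Rightarrow> real) \<Rightarrow> (nat \<Rightarrow> 'a \<Rightarrow> ennreal) \<Rightarrow> 'a \<Rightarrow> ennreal" where
  "objective n c v \<alpha> \<omega> =
     ennreal (\<Sum>j\<in>{j. j < n \<and> \<alpha> j \<omega> \<le> tau_star n c v \<alpha> \<omega>}. c j) + ennreal (v (i_star n c v \<alpha> \<omega>))"

end

theory Submission
  imports Defs
begin

(*
  The objective is beta of the taken box plus the opening costs c_j of the other boxes j that
  arrive by the stopping time T. Conditioned on the outcome (taken box, T), the probability that
  such a j arrives by T without being taken is at most Pr[alpha_j <= T]: by independence this can
  be checked with all other arrivals fixed, and then it is a positive correlation between two
  events for the atomless law of alpha_j. Summing, the expected opening cost of the other boxes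
  is at most sum_j c_j Pr[alpha_j <= T] <= sum_j c_j Lambda_j(T) <= T, where Lambda_j is the
  cumulative Poisson intensity of box j and the last step is the constraint of the convex program.
*)

section \<open>Poisson rounding\<close>

definition opening_mass :: "(nat \<Rightarrow> real) \<Rightarrow> (nat \<Rightarrow> real \<Rightarrow> real) \<Rightarrow> nat \<Rightarrow> real \<Rightarrow> real" where
  "opening_mass c X i t = X i t - X i (pos_part (t - c i))"

lemma xbar_eq: "xbar c X i t = integral {0..t} (opening_mass c X i) / t"
  by (simp add: xbar_def opening_mass_def[abs_def])

lemma prate_eq: "prate c X i \<tau> = xbar c X i (\<tau> / 2) / c i"
  by (simp add: prate_def)

lemma integral_le_length:
  fixes f :: "real \<Rightarrow> real"
  assumes "f integrable_on {0..t}" "\<And>s. s \<in> {0..t} \<Longrightarrow> f s \<le> 1" "0 \<le> t"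
  shows "integral {0..t} f \<le> t"
  using integral_le[OF assms(1) integrable_const_ivl assms(2)] assms(3) by simp

lemma opening_mass_bounds:
  assumes "gccp_feasible n c X" "i < n" "0 \<le> c i" "0 \<le> t"
  shows "0 \<le> opening_mass c X i t" "opening_mass c X i t \<le> 1"
proof -
  have mono: "mono_on {0..} (X i)" and X01: "\<And>s. 0 \<le> s \<Longrightarrow> 0 \<le> X i s \<and> X i s \<le> 1"
    using assms(1,2) by (auto simp: gccp_feasible_def)
  have s: "0 \<le> pos_part (t - c i)" "pos_part (t - c i) \<le> t"
    using assms(3,4) by (auto simp: pos_part_def)
  have "X i (pos_part (t - c i)) \<le> X i t"
    using mono_onD[OF mono _ _ s(2)] s(1) assms(4) by simp
  then show "0 \<le> opening_mass c X i t" "opening_mass c X i t \<le> 1"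
    using X01[OF assms(4)] X01[OF s(1)] unfolding opening_mass_def by linarith+
qed

lemma opening_mass_integrable:
  assumes "gccp_feasible n c X" "i < n"
  shows "opening_mass c X i integrable_on {0..s}"
proof -
  have mono: "mono_on {0..} (X i)"
    using assms by (auto simp: gccp_feasible_def)
  have "mono_on {0..s} (X i)" "mono_on {0..s} (\<lambda>t. X i (pos_part (t - c i)))"
    using mono by (auto intro!: mono_onI mono_onD[OF mono] simp: pos_part_def)
  then show ?thesis
    unfolding opening_mass_def[abs_def] by (intro integrable_diff integrable_on_mono_on)
qed

lemma xbar_bounds:
  assumes "gccp_feasible n c X" "i < n" "0 \<le> c i" "0 \<le> t"
  shows "0 \<le> xbar c X i t" "xbar c X i t \<le> 1"
proof -
  have "0 \<le> integral {0..t} (opening_mass c X i)" "integral {0..t} (opening_mass c X i) \<le> t"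
    using opening_mass_integrable[OF assms(1,2)] opening_mass_bounds[OF assms(1-3)] assms(4)
    by (auto intro!: integral_nonneg integral_le_length)
  then show "0 \<le> xbar c X i t" "xbar c X i t \<le> 1"
    unfolding xbar_eq by (auto simp: divide_le_eq)
qed

lemma sum_xbar_le_1:
  assumes "gccp_feasible n c X" "0 \<le> t"
  shows "(\<Sum>i<n. xbar c X i t) \<le> 1"
proof -
  have int: "\<And>i. i \<in> {..<n} \<Longrightarrow> opening_mass c X i integrable_on {0..t}"
    using opening_mass_integrable[OF assms(1)] by blast
  have "(\<Sum>i<n. integral {0..t} (opening_mass c X i)) = integral {0..t} (\<lambda>s. \<Sum>i<n. opening_mass c X i s)"
    by (rule integral_sum[OF finite_lessThan int, symmetric])
  also have "\<dots> \<le> t"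
  proof (rule integral_le_length[OF integrable_sum[OF finite_lessThan int] _ assms(2)])
    show "(\<Sum>i<n. opening_mass c X i s) \<le> 1" if "s \<in> {0..t}" for s
      using assms(1) that by (simp add: gccp_feasible_def opening_mass_def)
  qed
  finally show ?thesis
    using assms(2) unfolding xbar_eq sum_divide_distrib[symmetric]
    by (cases "t = 0") (simp_all add: divide_le_eq_1)
qed

lemma xbar_isCont:
  assumes "gccp_feasible n c X" "i < n" "0 < t"
  shows "isCont (xbar c X i) t"
proof -
  have "continuous_on {0..t+1} (\<lambda>s. integral {0..s} (opening_mass c X i))"
    by (rule indefinite_integral_continuous_1[OF opening_mass_integrable[OF assms(1,2)]])
  then have "isCont (\<lambda>s. integral {0..s} (opening_mass c X i)) t"
    by (rule continuous_on_interior) (use assms(3) in auto)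
  then show ?thesis
    unfolding xbar_eq[abs_def] using assms(3) by (intro continuous_intros) auto
qed

lemma prate_bounds:
  assumes "gccp_feasible n c X" "i < n" "0 < c i" "0 \<le> \<tau>"
  shows "0 \<le> prate c X i \<tau>" "prate c X i \<tau> \<le> 1 / c i"
  using xbar_bounds[OF assms(1,2) _, of "\<tau> / 2"] assms(3,4)
  by (auto simp: prate_eq divide_right_mono)

lemma prate_integrable:
  assumes "gccp_feasible n c X" "i < n" "0 < c i"
  shows "prate c X i integrable_on {0..s}"
proof -
  have "continuous_on {0<..s} (prate c X i)"
    unfolding prate_eq[abs_def]
    by (intro continuous_at_imp_continuous_on ballI continuous_intros isCont_o2[OF _ xbar_isCont[OF assms(1,2)]])
      (use assms(3) in auto)
  then have "prate c X i \<in> borel_measurable (lebesgue_on {0<..s})"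
    by (rule continuous_imp_measurable_on_sets_lebesgue) auto
  moreover have "(\<lambda>_. 1 / c i) integrable_on {0<..s}"
    by (rule integrable_spike_set[OF integrable_const_ivl[of "1 / c i" 0 s]])
      (auto intro: negligible_subset[of "{0}"])
  ultimately have "prate c X i integrable_on {0<..s}"
    by (rule measurable_bounded_by_integrable_imp_integrable_real) (use prate_bounds[OF assms] in auto)
  then show ?thesis
    by (rule integrable_spike_set) (auto intro: negligible_subset[of "{0}"])
qed

lemma cum_rate_0 [simp]: "cum_rate c X i 0 = 0"
  by (simp add: cum_rate_def)

lemma cum_rate_nonneg:
  assumes "gccp_feasible n c X" "i < n" "0 < c i"
  shows "0 \<le> cum_rate c X i t"
  unfolding cum_rate_def
  by (rule integral_nonneg[OF prate_integrable[OF assms]]) (use prate_bounds[OF assms] in auto)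

lemma cum_rate_isCont:
  assumes "gccp_feasible n c X" "i < n" "0 < c i" "0 < t"
  shows "isCont (cum_rate c X i) t"
proof -
  have "continuous_on {0..t+1} (cum_rate c X i)"
    unfolding cum_rate_def[abs_def]
    by (rule indefinite_integral_continuous_1[OF prate_integrable[OF assms(1-3)]])
  then show ?thesis
    by (rule continuous_on_interior) (use assms(4) in auto)
qed

text \<open>\<open>c\<^sub>i\<close> times the rate of box \<open>i\<close> at \<open>\<tau>\<close> is \<open>x\<^sub>i(\<tau>/2)\<close>, and these sum to at most 1.\<close>
lemma sum_cum_rate_le:
  assumes "gccp_feasible n c X" "\<And>i. i < n \<Longrightarrow> 0 < c i" "0 \<le> t"
  shows "(\<Sum>i<n. c i * cum_rate c X i t) \<le> t"
proof -
  have int: "\<And>i. i \<in> {..<n} \<Longrightarrow> (\<lambda>\<tau>. c i * prate c X i \<tau>) integrable_on {0..t}"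
    using integrable_cmul[OF prate_integrable[OF assms(1) _ assms(2)]] by auto
  have "(\<Sum>i<n. c i * cum_rate c X i t) = (\<Sum>i<n. integral {0..t} (\<lambda>\<tau>. c i * prate c X i \<tau>))"
    by (simp add: cum_rate_def)
  also have "\<dots> = integral {0..t} (\<lambda>\<tau>. \<Sum>i<n. c i * prate c X i \<tau>)"
    by (rule integral_sum[OF finite_lessThan int, symmetric])
  also have "\<dots> \<le> t"
  proof (rule integral_le_length[OF integrable_sum[OF _ int] _ assms(3)])
    fix \<tau> assume "\<tau> \<in> {0..t}"
    have "c i * prate c X i \<tau> = xbar c X i (\<tau> / 2)" if "i < n" for i
      using assms(2)[OF that] by (simp add: prate_eq)
    then have "(\<Sum>i<n. c i * prate c X i \<tau>) = (\<Sum>i<n. xbar c X i (\<tau> / 2))"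
      by (intro sum.cong) auto
    then show "(\<Sum>i<n. c i * prate c X i \<tau>) \<le> 1"
      using sum_xbar_le_1[OF assms(1)] \<open>\<tau> \<in> {0..t}\<close> by simp
  qed simp
  finally show ?thesis .
qed

section \<open>Laws of the arrival times\<close>

lemma (in prob_space) emeasure_distr_atMost_eq:
  fixes a :: "'a \<Rightarrow> ennreal"
  assumes a: "a \<in> borel_measurable M" and survival: "prob {\<omega> \<in> space M. ennreal t < a \<omega>} = p"
  shows "emeasure (distr M borel a) {..ennreal t} = ennreal (1 - p)"
proof -
  have "emeasure (distr M borel a) {..ennreal t} = emeasure M (space M - {\<omega> \<in> space M. ennreal t < a \<omega>})"
    using a by (subst emeasure_distr) (auto intro!: arg_cong[where f = "emeasure M"] simp: not_less)
  also have "\<dots> = ennreal (1 - p)"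
    using a survival by (simp add: emeasure_eq_measure prob_compl)
  finally show ?thesis .
qed

text \<open>The mass at \<open>t > 0\<close> is at most \<open>G s - G t\<close> for every \<open>s < t\<close>.\<close>
lemma (in prob_space) emeasure_distr_singleton_eq_0:
  fixes a :: "'a \<Rightarrow> ennreal"
  assumes a: "a \<in> borel_measurable M"
    and survival: "\<And>\<tau>. 0 \<le> \<tau> \<Longrightarrow> prob {\<omega> \<in> space M. ennreal \<tau> < a \<omega>} = G \<tau>"
    and G0: "G 0 = 1" and G_cont: "\<And>\<tau>. 0 < \<tau> \<Longrightarrow> isCont G \<tau>" and t: "0 \<le> t"
  shows "emeasure (distr M borel a) {ennreal t} = 0"
proof -
  let ?A = "{\<omega> \<in> space M. a \<omega> = ennreal t}"
  have "prob ?A \<le> 0"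
  proof (cases "t = 0")
    case True
    have "prob ?A \<le> prob (space M - {\<omega> \<in> space M. ennreal 0 < a \<omega>})"
      using a True by (intro finite_measure_mono) auto
    also have "\<dots> = 0"
      using a survival[of 0] G0 by (simp add: prob_compl)
    finally show ?thesis .
  next
    case False
    then have "0 < t" using t by simp
    have "isCont (\<lambda>s. G s - G t) t"
      using G_cont[OF \<open>0 < t\<close>] by (intro continuous_intros)
    then have "((\<lambda>s. G s - G t) \<longlongrightarrow> 0) (at t)"
      unfolding isCont_def by simp
    then have "((\<lambda>s. G s - G t) \<longlongrightarrow> 0) (at_left t)"
      by (rule filterlim_mono[OF _ order_refl at_le]) simp
    moreover have "\<forall>\<^sub>F s in at_left t. prob ?A \<le> G s - G t"
      using eventually_at_left_real[OF \<open>0 < t\<close>]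
    proof eventually_elim
      case (elim s)
      then have "ennreal s < ennreal t"
        by (simp add: ennreal_less_iff)
      then have sub: "{\<omega> \<in> space M. ennreal t < a \<omega>} \<subseteq> {\<omega> \<in> space M. ennreal s < a \<omega>}"
        by (auto dest: less_trans)
      have "prob ?A \<le> prob ({\<omega> \<in> space M. ennreal s < a \<omega>} - {\<omega> \<in> space M. ennreal t < a \<omega>})"
        using a elim by (intro finite_measure_mono) (auto simp: ennreal_less_iff)
      also have "\<dots> = G s - G t"
        using a elim t sub by (subst finite_measure_Diff) (auto simp: survival)
      finally show ?case .
    qed
    ultimately show ?thesis
      by (intro tendsto_le[OF _ _ tendsto_const]) auto
  qed
  then have "prob ?A = 0"
    by (simp add: measure_nonneg order_antisym)
  then show ?thesis
    using a by (subst emeasure_distr) (auto simp: emeasure_eq_measure vimage_def Int_def conj_commute)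
qed

lemma (in prob_space) distr_indep_vars_eq_PiM:
  assumes "I \<noteq> {}" "\<And>i. i \<in> I \<Longrightarrow> X i \<in> M \<rightarrow>\<^sub>M N i" "indep_vars N X I"
    and laws: "\<And>i. i \<in> I \<Longrightarrow> D i = distr M (N i) (X i)"
  shows "distr M (\<Pi>\<^sub>M i\<in>I. D i) (\<lambda>\<omega>. \<lambda>i\<in>I. X i \<omega>) = (\<Pi>\<^sub>M i\<in>I. D i)"
proof -
  have "distr M (\<Pi>\<^sub>M i\<in>I. D i) (\<lambda>\<omega>. \<lambda>i\<in>I. X i \<omega>)
      = distr M (\<Pi>\<^sub>M i\<in>I. N i) (\<lambda>\<omega>. \<lambda>i\<in>I. X i \<omega>)"
    using laws by (intro distr_cong sets_PiM_cong) simp_all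
  also have "\<dots> = (\<Pi>\<^sub>M i\<in>I. distr M (N i) (X i))"
    using indep_vars_iff_distr_eq_PiM'[OF assms(1,2)] assms(3) by (rule iffD1)
  also have "\<dots> = (\<Pi>\<^sub>M i\<in>I. D i)"
    using laws by (intro PiM_cong) simp_all
  finally show ?thesis .
qed

lemma (in prob_space) poisson_arrival_atomless:
  assumes "gccp_feasible n c X" "i < n" "0 < c i" "a \<in> borel_measurable M"
    and "\<And>\<tau>. 0 \<le> \<tau> \<Longrightarrow> prob {\<omega> \<in> space M. ennreal \<tau> < a \<omega>} = exp (- cum_rate c X i \<tau>)"
    and "0 \<le> t"
  shows "emeasure (distr M borel a) {ennreal t} = 0"
  using cum_rate_isCont[OF assms(1-3)]
  by (intro emeasure_distr_singleton_eq_0[OF assms(4,5) _ _ assms(6)]) (auto intro!: continuous_intros)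

lemma (in prob_space) poisson_arrivals_weighted_cdf_le:
  assumes X: "gccp_feasible n c X" and c: "\<And>i. i < n \<Longrightarrow> 0 < c i"
    and a: "\<And>i. i < n \<Longrightarrow> a i \<in> borel_measurable M"
    and survival: "\<And>i \<tau>. i < n \<Longrightarrow> 0 \<le> \<tau> \<Longrightarrow>
      prob {\<omega> \<in> space M. ennreal \<tau> < a i \<omega>} = exp (- cum_rate c X i \<tau>)"
    and t: "0 \<le> t"
  shows "(\<Sum>j<n. ennreal (c j) * emeasure (distr M borel (a j)) {..ennreal t}) \<le> ennreal t"
proof -
  have cdf: "ennreal (c j) * emeasure (distr M borel (a j)) {..ennreal t} = ennreal (c j * (1 - exp (- cum_rate c X j t)))"
    if "j \<in> {..<n}" for j
    using that emeasure_distr_atMost_eq[OF a survival] less_imp_le[OF c[of j]] cum_rate_nonneg[OF X _ c, of j t] t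
    by (simp add: ennreal_mult)
  have "(\<Sum>j<n. c j * (1 - exp (- cum_rate c X j t))) \<le> (\<Sum>j<n. c j * cum_rate c X j t)"
  proof (intro sum_mono mult_left_mono)
    show "1 - exp (- cum_rate c X j t) \<le> cum_rate c X j t" for j
      using exp_ge_add_one_self[of "- cum_rate c X j t"] by simp
  qed (use c in \<open>simp add: less_imp_le\<close>)
  also have "\<dots> \<le> t"
    by (rule sum_cum_rate_le[OF X c t])
  finally have sum_le: "(\<Sum>j<n. c j * (1 - exp (- cum_rate c X j t))) \<le> t" .
  have nonneg: "0 \<le> c j * (1 - exp (- cum_rate c X j t))" if "j \<in> {..<n}" for j
    using that less_imp_le[OF c[of j]] cum_rate_nonneg[OF X _ c, of j t] by (simp add: mult_nonneg_nonneg)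
  have "(\<Sum>j<n. ennreal (c j) * emeasure (distr M borel (a j)) {..ennreal t})
      = (\<Sum>j<n. ennreal (c j * (1 - exp (- cum_rate c X j t))))"
    by (rule sum.cong[OF refl cdf])
  also have "\<dots> = ennreal (\<Sum>j<n. c j * (1 - exp (- cum_rate c X j t)))"
    by (rule sum_ennreal) (rule nonneg)
  also have "\<dots> \<le> ennreal t"
    by (rule ennreal_leI) (rule sum_le)
  finally show ?thesis .
qed

section \<open>Conditional expectations\<close>

text \<open>Otherwise, for some rationals \<open>q < r\<close>, the set where \<open>g \<le> q\<close> and \<open>r \<le> E[f|F]\<close> is an
  \<open>F\<close>-event of positive finite measure.\<close>
lemma (in finite_measure_subalgebra) AE_nn_cond_exp_le:
  assumes [measurable]: "f \<in> borel_measurable M" "g \<in> borel_measurable F"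
    and le: "\<And>A. A \<in> sets F \<Longrightarrow> (\<integral>\<^sup>+x. indicator A x * f x \<partial>M) \<le> (\<integral>\<^sup>+x. indicator A x * g x \<partial>M)"
  shows "AE x in M. nn_cond_exp M F f x \<le> g x"
proof -
  let ?h = "nn_cond_exp M F f"
  have sF: "space F = space M" "sets F \<subseteq> sets M"
    using subalg by (auto simp: subalgebra_def)
  have [measurable]: "g \<in> borel_measurable M"
    by (rule measurable_from_subalg[OF subalg]) simp
  have null: "AE x in M. \<not> (g x \<le> ennreal (of_rat q) \<and> ennreal (of_rat r) \<le> ?h x)"
    if "0 \<le> q" "q < r" for q r :: rat
  proof -
    define B where "B = {x \<in> space M. g x \<le> ennreal (of_rat q) \<and> ennreal (of_rat r) \<le> ?h x}"
    have BF: "B \<in> sets F"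
      unfolding B_def sF(1)[symmetric] by measurable
    then have BM: "B \<in> sets M"
      using sF by auto
    have "ennreal (of_rat r) * emeasure M B = (\<integral>\<^sup>+x. indicator B x * ennreal (of_rat r) \<partial>M)"
      using BM by (simp add: nn_integral_cmult_indicator mult.commute)
    also have "\<dots> \<le> (\<integral>\<^sup>+x. indicator B x * ?h x \<partial>M)"
      by (rule nn_integral_mono) (auto simp: B_def split: split_indicator)
    also have "\<dots> = (\<integral>\<^sup>+x. indicator B x * f x \<partial>M)"
      using BF by (intro nn_cond_exp_intg) auto
    also have "\<dots> \<le> (\<integral>\<^sup>+x. indicator B x * g x \<partial>M)"
      by (rule le[OF BF])
    also have "\<dots> \<le> (\<integral>\<^sup>+x. indicator B x * ennreal (of_rat q) \<partial>M)"
      by (rule nn_integral_mono) (auto simp: B_def split: split_indicator)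
    also have "\<dots> = ennreal (of_rat q) * emeasure M B"
      using BM by (simp add: nn_integral_cmult_indicator mult.commute)
    finally have "ennreal (of_rat r * measure M B) \<le> ennreal (of_rat q * measure M B)"
      using that by (simp add: emeasure_eq_measure ennreal_mult zero_le_of_rat_iff)
    then have "of_rat r * measure M B \<le> (of_rat q * measure M B :: real)"
      using that by (subst (asm) ennreal_le_iff) (simp_all add: zero_le_of_rat_iff)
    then have "measure M B = 0"
    proof (rule contrapos_pp)
      assume "measure M B \<noteq> 0"
      then have "0 < measure M B"
        using measure_nonneg[of M B] by linarith
      then show "\<not> of_rat r * measure M B \<le> (of_rat q * measure M B :: real)"
        using that(2) by (simp add: of_rat_less_eq not_le)
    qed
    then show ?thesis
      using BM by (subst AE_iff_measurable[OF BM]) (auto simp: B_def emeasure_eq_measure)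
  qed
  have "AE x in M. \<forall>q r :: rat. 0 \<le> q \<and> q < r \<longrightarrow> \<not> (g x \<le> ennreal (of_rat q) \<and> ennreal (of_rat r) \<le> ?h x)"
    using null by (simp add: AE_all_countable)
  then show ?thesis
  proof eventually_elim
    case (elim x)
    show ?case
    proof (rule ccontr)
      assume "\<not> ?h x \<le> g x"
      then obtain q where q: "g x < of_rat q" "of_rat q < ?h x"
        using ennreal_rat_dense[of "g x" "?h x"] by (auto simp: not_le)
      then obtain r where r: "of_rat r < ?h x" "ennreal (of_rat q) < of_rat r"
        using ennreal_rat_dense[of "ennreal (of_rat q)" "?h x"] by auto
      have "0 < ennreal (of_rat q)"
        using q(1) by (rule le_less_trans[OF zero_le])
      then have "0 < q"
        by simp
      moreover from r(2) this have "q < r"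
        by (simp add: ennreal_less_iff of_rat_less)
      ultimately have "0 \<le> q" "q < r"
        by simp_all
      with q(1) r(1) show False
        using elim by (meson less_imp_le)
    qed
  qed
qed

lemma (in prob_space) AE_nn_cond_exp_vimage_le:
  assumes A: "A \<in> M \<rightarrow>\<^sub>M P" and \<phi>: "\<phi> \<in> P \<rightarrow>\<^sub>M N"
    and [measurable]: "f \<in> borel_measurable P" "g \<in> borel_measurable N"
    and le: "\<And>B. B \<in> sets N \<Longrightarrow>
      (\<integral>\<^sup>+x. indicator B (\<phi> x) * f x \<partial>distr M P A) \<le> (\<integral>\<^sup>+x. indicator B (\<phi> x) * g (\<phi> x) \<partial>distr M P A)"
  shows "AE \<omega> in M. nn_cond_exp M (vimage_algebra (space M) (\<lambda>\<omega>. \<phi> (A \<omega>)) N) (\<lambda>\<omega>. f (A \<omega>)) \<omega>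
           \<le> g (\<phi> (A \<omega>))"
proof -
  let ?\<psi> = "\<lambda>\<omega>. \<phi> (A \<omega>)"
  let ?F = "vimage_algebra (space M) ?\<psi> N"
  have \<psi>: "?\<psi> \<in> M \<rightarrow>\<^sub>M N"
    using A \<phi> by (rule measurable_compose)
  have sets_F: "sets ?F = {?\<psi> -` B \<inter> space M | B. B \<in> sets N}"
    using measurable_space[OF \<psi>] by (intro sets_vimage_algebra2) auto
  interpret finite_measure_subalgebra M ?F
    by unfold_locales (use sets_F measurable_sets[OF \<psi>] in \<open>auto simp: subalgebra_def\<close>)
  have integral_transfer: "(\<integral>\<^sup>+\<omega>. indicator (?\<psi> -` B \<inter> space M) \<omega> * h (A \<omega>) \<partial>M)
      = (\<integral>\<^sup>+x. indicator B (\<phi> x) * h x \<partial>distr M P A)"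
    if "B \<in> sets N" "h \<in> borel_measurable P" for B h
    using that A \<phi> by (subst nn_integral_distr) (auto intro!: nn_integral_cong simp: indicator_def)
  show ?thesis
  proof (rule AE_nn_cond_exp_le)
    show "(\<lambda>\<omega>. f (A \<omega>)) \<in> borel_measurable M"
      using A by measurable
    show "(\<lambda>\<omega>. g (?\<psi> \<omega>)) \<in> borel_measurable ?F"
      using measurable_space[OF \<psi>] by (intro measurable_compose[OF measurable_vimage_algebra1]) auto
  next
    fix S assume "S \<in> sets ?F"
    then obtain B where B: "B \<in> sets N" "S = ?\<psi> -` B \<inter> space M"
      using sets_F by auto
    have "(\<integral>\<^sup>+\<omega>. indicator S \<omega> * f (A \<omega>) \<partial>M) = (\<integral>\<^sup>+x. indicator B (\<phi> x) * f x \<partial>distr M P A)"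
      unfolding B(2) by (rule integral_transfer[OF B(1)]) simp
    also have "\<dots> \<le> (\<integral>\<^sup>+x. indicator B (\<phi> x) * g (\<phi> x) \<partial>distr M P A)"
      by (rule le[OF B(1)])
    also have "\<dots> = (\<integral>\<^sup>+\<omega>. indicator S \<omega> * g (?\<psi> \<omega>) \<partial>M)"
      unfolding B(2) using \<phi> by (intro integral_transfer[OF B(1), symmetric]) measurable
    finally show "(\<integral>\<^sup>+\<omega>. indicator S \<omega> * f (A \<omega>) \<partial>M)
        \<le> (\<integral>\<^sup>+\<omega>. indicator S \<omega> * g (?\<psi> \<omega>) \<partial>M)" .
  qed
qed

section \<open>Measurability and integration\<close>

lemma upset_in_borel:
  fixes U :: "'a :: {complete_linorder, linorder_topology} set"
  assumes up: "\<And>a b. a \<in> U \<Longrightarrow> a \<le> b \<Longrightarrow> b \<in> U"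
  shows "U \<in> sets borel"
proof (cases "Inf U \<in> U")
  case True
  then have "U = {Inf U..}"
    using up by (auto intro: Inf_lower)
  then show ?thesis
    by (metis borel_closed closed_atLeast)
next
  case False
  have "U = {Inf U<..}"
  proof safe
    fix x assume "x \<in> U"
    then show "Inf U < x"
      using False by (metis Inf_lower order_le_neq_trans)
  next
    fix x assume "Inf U < x"
    then obtain b where "b \<in> U" "b < x"
      by (auto simp: Inf_less_iff)
    then show "x \<in> U"
      using up by auto
  qed
  then show ?thesis
    by (metis borel_open open_greaterThan)
qed

lemma measurable_emeasure_atMost:
  fixes D :: "ennreal measure"
  assumes sets_D: "sets D = sets borel" and "sigma_finite_measure D"
  shows "(\<lambda>t. emeasure D {..t}) \<in> borel_measurable borel"
proof -
  interpret sigma_finite_measure D by fact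
  have "{p \<in> space (borel \<Otimes>\<^sub>M borel). snd p \<le> fst p} \<in> sets (borel \<Otimes>\<^sub>M (borel :: ennreal measure))"
    by measurable
  moreover have "{p \<in> space (borel \<Otimes>\<^sub>M borel). snd p \<le> fst p} = {(t, a :: ennreal). a \<le> t}"
    by (auto simp: space_pair_measure)
  ultimately have "{(t, a). a \<le> t} \<in> sets (borel \<Otimes>\<^sub>M D)"
    by (simp add: sets_pair_measure_cong[OF refl sets_D])
  from measurable_emeasure_Pair[OF this] show ?thesis
    by (simp add: atMost_def)
qed

lemma nn_integral_weighted_sum:
  fixes f :: "nat \<Rightarrow> 'a \<Rightarrow> ennreal"
  assumes "\<And>j. j < n \<Longrightarrow> f j \<in> borel_measurable M" "g \<in> borel_measurable M"
  shows "(\<integral>\<^sup>+x. g x + (\<Sum>j<n. w j * f j x) \<partial>M) = (\<integral>\<^sup>+x. g x \<partial>M) + (\<Sum>j<n. w j * integral\<^sup>N M (f j))"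
proof -
  have meas: "(\<lambda>x. w j * f j x) \<in> borel_measurable M" if "j \<in> {..<n}" for j
    using assms(1) that by (auto intro: borel_measurable_times_ennreal)
  have "(\<integral>\<^sup>+x. g x + (\<Sum>j<n. w j * f j x) \<partial>M)
      = (\<integral>\<^sup>+x. g x \<partial>M) + (\<integral>\<^sup>+x. (\<Sum>j<n. w j * f j x) \<partial>M)"
    using meas by (intro nn_integral_add assms(2) borel_measurable_sum) auto
  also have "(\<integral>\<^sup>+x. (\<Sum>j<n. w j * f j x) \<partial>M) = (\<Sum>j<n. \<integral>\<^sup>+x. w j * f j x \<partial>M)"
    using meas by (rule nn_integral_sum)
  also have "\<dots> = (\<Sum>j<n. w j * integral\<^sup>N M (f j))"
    using assms(1) by (intro sum.cong refl nn_integral_cmult) auto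
  finally show ?thesis .
qed

section \<open>Balanced stopping\<close>

lemma tau_star_le: "k < n \<Longrightarrow> tau_star n c v \<alpha> \<omega> \<le> tau_box c v \<alpha> k \<omega>"
  unfolding tau_star_def by (intro Min_le) auto

lemma i_star_attains_tau_star:
  assumes "0 < n"
  shows "i_star n c v \<alpha> \<omega> < n" "tau_box c v \<alpha> (i_star n c v \<alpha> \<omega>) \<omega> = tau_star n c v \<alpha> \<omega>"
proof -
  have "tau_star n c v \<alpha> \<omega> \<in> (\<lambda>i. tau_box c v \<alpha> i \<omega>) ` {..<n}"
    unfolding tau_star_def using assms by (intro Min_in) auto
  then have "\<exists>k. k < n \<and> tau_box c v \<alpha> k \<omega> = tau_star n c v \<alpha> \<omega>"
    by auto
  from LeastI_ex[OF this] show "i_star n c v \<alpha> \<omega> < n" "tau_box c v \<alpha> (i_star n c v \<alpha> \<omega>) \<omega> = tau_star n c v \<alpha> \<omega>"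
    unfolding i_star_def by simp_all
qed

lemma i_star_le: "k < n \<Longrightarrow> tau_box c v \<alpha> k \<omega> = tau_star n c v \<alpha> \<omega> \<Longrightarrow> i_star n c v \<alpha> \<omega> \<le> k"
  unfolding i_star_def by (rule Least_le) simp

lemma tau_star_cong:
  assumes "\<And>k. k < n \<Longrightarrow> tau_box c v \<alpha> k \<omega> = tau_box c v \<alpha>' k \<omega>'"
  shows "tau_star n c v \<alpha> \<omega> = tau_star n c v \<alpha>' \<omega>'"
  unfolding tau_star_def using assms by (intro arg_cong[where f = Min] image_cong) auto

lemma i_star_cong:
  assumes "\<And>k. k < n \<Longrightarrow> tau_box c v \<alpha> k \<omega> = tau_box c v \<alpha>' k \<omega>'"
  shows "i_star n c v \<alpha> \<omega> = i_star n c v \<alpha>' \<omega>'"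
proof -
  have "tau_star n c v \<alpha> \<omega> = tau_star n c v \<alpha>' \<omega>'"
    by (rule tau_star_cong[OF assms])
  then show ?thesis
    unfolding i_star_def by (intro arg_cong[where f = Least] ext) (use assms in auto)
qed

lemma objective_cong:
  assumes "\<And>k. k < n \<Longrightarrow> \<alpha> k \<omega> = \<alpha>' k \<omega>'"
  shows "objective n c v \<alpha> \<omega> = objective n c v \<alpha>' \<omega>'"
proof -
  have "\<And>k. k < n \<Longrightarrow> tau_box c v \<alpha> k \<omega> = tau_box c v \<alpha>' k \<omega>'"
    using assms by (simp add: tau_box_def)
  note tau_star_cong[OF this] i_star_cong[OF this]
  moreover have "{j. j < n \<and> \<alpha> j \<omega> \<le> tau_star n c v \<alpha>' \<omega>'} = {j. j < n \<and> \<alpha>' j \<omega>' \<le> tau_star n c v \<alpha>' \<omega>'}"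
    using assms by auto
  ultimately show ?thesis
    unfolding objective_def by simp
qed

lemma tau_box_coordinate: "tau_box c v (\<lambda>i x. x i) i x = max (x i) (ennreal (beta c v i))"
  by (simp add: tau_box_def)

locale balanced_stopping =
  fixes n :: nat and c v :: "nat \<Rightarrow> real"
  assumes n_pos: "0 < n"
    and c_pos: "\<And>i. i < n \<Longrightarrow> 0 < c i"
    and v_nonneg: "\<And>i. i < n \<Longrightarrow> 0 \<le> v i"
begin

abbreviation stop_time :: "(nat \<Rightarrow> ennreal) \<Rightarrow> ennreal" where
  "stop_time \<equiv> tau_star n c v (\<lambda>i x. x i)"

abbreviation taken_box :: "(nat \<Rightarrow> ennreal) \<Rightarrow> nat" where
  "taken_box \<equiv> i_star n c v (\<lambda>i x. x i)"

abbreviation outcome :: "(nat \<Rightarrow> ennreal) \<Rightarrow> nat \<times> ennreal" where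
  "outcome x \<equiv> (taken_box x, stop_time x)"

abbreviation opened_untaken :: "nat \<Rightarrow> (nat \<Rightarrow> ennreal) \<Rightarrow> bool" where
  "opened_untaken j x \<equiv> x j \<le> stop_time x \<and> taken_box x \<noteq> j"

lemma stop_time_le: "k < n \<Longrightarrow> stop_time x \<le> max (x k) (ennreal (beta c v k))"
  using tau_star_le[of k n c v "\<lambda>i x. x i" x] by (simp add: tau_box_coordinate)

lemma taken_box_less: "taken_box x < n"
  by (rule i_star_attains_tau_star(1)[OF n_pos])

lemma taken_box_attains_stop_time: "max (x (taken_box x)) (ennreal (beta c v (taken_box x))) = stop_time x"
  using i_star_attains_tau_star(2)[OF n_pos, of c v "\<lambda>i x. x i" x] by (simp add: tau_box_coordinate)

lemma taken_box_le: "k < n \<Longrightarrow> max (x k) (ennreal (beta c v k)) = stop_time x \<Longrightarrow> taken_box x \<le> k"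
  by (rule i_star_le) (simp_all add: tau_box_coordinate)

lemma stopping_upd_cong:
  assumes "max a (ennreal (beta c v j)) = max b (ennreal (beta c v j))"
  shows "taken_box (y(j := a)) = taken_box (y(j := b))" "stop_time (y(j := a)) = stop_time (y(j := b))"
proof -
  have "\<And>k. k < n \<Longrightarrow> tau_box c v (\<lambda>i x. x i) k (y(j := a)) = tau_box c v (\<lambda>i x. x i) k (y(j := b))"
    using assms by (simp add: tau_box_coordinate)
  then show "taken_box (y(j := a)) = taken_box (y(j := b))" "stop_time (y(j := a)) = stop_time (y(j := b))"
    by (fact i_star_cong tau_star_cong)+
qed

lemma stopping_upd_eq_if_not_taken:
  assumes a: "taken_box (y(j := a)) \<noteq> j" and b: "taken_box (y(j := b)) \<noteq> j"
  shows "taken_box (y(j := a)) = taken_box (y(j := b))" "stop_time (y(j := a)) = stop_time (y(j := b))"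
proof -
  let ?x = "y(j := a)" and ?z = "y(j := b)"
  have box_eq: "max (?x k) (ennreal (beta c v k)) = max (?z k) (ennreal (beta c v k))" if "k \<noteq> j" for k
    using that by simp
  have "stop_time ?z \<le> stop_time ?x"
    using stop_time_le[OF taken_box_less, of ?z ?x] box_eq[OF a] taken_box_attains_stop_time[of ?x] by simp
  moreover have "stop_time ?x \<le> stop_time ?z"
    using stop_time_le[OF taken_box_less, of ?x ?z] box_eq[OF b] taken_box_attains_stop_time[of ?z] by simp
  ultimately show stop: "stop_time ?x = stop_time ?z"
    by (rule antisym[rotated])
  have "taken_box ?z \<le> taken_box ?x"
    using box_eq[OF a] taken_box_attains_stop_time[of ?x] stop by (intro taken_box_le taken_box_less) simp
  moreover have "taken_box ?x \<le> taken_box ?z"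
    using box_eq[OF b] taken_box_attains_stop_time[of ?z] stop by (intro taken_box_le taken_box_less) simp
  ultimately show "taken_box ?x = taken_box ?z"
    by simp
qed

lemma not_taken_upd_mono:
  assumes j: "j < n" and a: "taken_box (y(j := a)) \<noteq> j" and "a \<le> b"
  shows "taken_box (y(j := b)) \<noteq> j"
proof
  assume b: "taken_box (y(j := b)) = j"
  let ?x = "y(j := a)" and ?z = "y(j := b)" and ?\<beta> = "ennreal (beta c v j)"
  have "max b ?\<beta> = stop_time ?z"
    using taken_box_attains_stop_time[of ?z] b by simp
  also have "\<dots> \<le> max (?z (taken_box ?x)) (ennreal (beta c v (taken_box ?x)))"
    by (rule stop_time_le[OF taken_box_less])
  also have "\<dots> = stop_time ?x"
    using a taken_box_attains_stop_time[of ?x] by simp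
  also have "\<dots> \<le> max a ?\<beta>"
    using stop_time_le[OF j, of ?x] by simp
  finally have "max b ?\<beta> \<le> max a ?\<beta>" .
  moreover have "max a ?\<beta> \<le> max b ?\<beta>"
    using \<open>a \<le> b\<close> by (rule max.mono) simp
  ultimately have "max a ?\<beta> = max b ?\<beta>"
    by (rule antisym[rotated])
  from stopping_upd_cong(1)[OF this, of y] a b show False
    by simp
qed

text \<open>If box \<open>j\<close> arrives before the stopping time without being taken, then \<open>\<alpha>\<^sub>j < \<beta>\<^sub>j\<close>, so
  moving its arrival anywhere below \<open>\<alpha>\<^sub>j\<close> leaves \<open>\<tau>\<^sub>j\<close> unchanged; moving it up keeps it untaken.\<close>
lemma not_taken_upd_all:
  assumes j: "j < n" and a: "taken_box (y(j := a)) \<noteq> j" and early: "a < stop_time (y(j := a))"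
  shows "taken_box (y(j := b)) \<noteq> j"
proof (cases "a \<le> b")
  case True
  then show ?thesis
    using not_taken_upd_mono[OF j a] by simp
next
  case False
  have "a < ennreal (beta c v j)"
    using early stop_time_le[OF j, of "y(j := a)"] by (simp add: less_max_iff_disj max_def split: if_splits)
  moreover have "b \<le> a"
    using False by simp
  ultimately have "max a (ennreal (beta c v j)) = ennreal (beta c v j)"
    "max b (ennreal (beta c v j)) = ennreal (beta c v j)"
    by (simp_all add: max_absorb2)
  then have "max a (ennreal (beta c v j)) = max b (ennreal (beta c v j))"
    by simp
  from stopping_upd_cong(1)[OF this, of y] a show ?thesis
    by simp
qed

lemma not_taken_upd_atMost_subset:
  assumes j: "j < n" and a0: "taken_box (y(j := a0)) \<noteq> j" and taken: "taken_box (y(j := b)) = j"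
  shows "{a. taken_box (y(j := a)) \<noteq> j} \<inter> {..stop_time (y(j := a0))} \<subseteq> {stop_time (y(j := a0))}"
proof clarify
  fix a assume a: "taken_box (y(j := a)) \<noteq> j" "a \<le> stop_time (y(j := a0))"
  have "stop_time (y(j := a)) = stop_time (y(j := a0))"
    by (rule stopping_upd_eq_if_not_taken(2)[OF a(1) a0])
  with not_taken_upd_all[OF j a(1), of b] taken have "\<not> a < stop_time (y(j := a0))"
    by auto
  with a(2) show "a = stop_time (y(j := a0))"
    by (meson antisym not_less)
qed

lemma objective_coordinate_eq:
  "objective n c v (\<lambda>i x. x i) x =
     ennreal (beta c v (taken_box x)) + (\<Sum>j<n. ennreal (c j) * of_bool (opened_untaken j x))"
proof -
  let ?i = "taken_box x"
  let ?W = "{j. j < n \<and> x j \<le> stop_time x}"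
  let ?S = "\<Sum>j<n. c j * of_bool (opened_untaken j x)"
  have "?i \<in> ?W"
    using taken_box_less taken_box_attains_stop_time[of x] by (metis max.bounded_iff mem_Collect_eq order_refl)
  then have "(\<Sum>j\<in>?W. c j) = c ?i + (\<Sum>j\<in>?W - {?i}. c j)"
    by (intro sum.remove) auto
  also have "?W - {?i} = {j \<in> {..<n}. opened_untaken j x}"
    by auto
  also have "(\<Sum>j\<in>\<dots>. c j) = (\<Sum>j<n. if opened_untaken j x then c j else 0)"
    by (rule sum.inter_filter) simp
  also have "\<dots> = ?S"
    by (intro sum.cong) auto
  finally have W_sum: "(\<Sum>j\<in>?W. c j) = c ?i + ?S" .
  have nonneg: "0 \<le> c ?i" "0 \<le> v ?i" "0 \<le> ?S"
    using c_pos v_nonneg taken_box_less[of x] by (auto intro!: sum_nonneg simp: less_imp_le)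
  have "objective n c v (\<lambda>i x. x i) x = ennreal (c ?i + ?S) + ennreal (v ?i)"
    by (simp add: objective_def W_sum)
  also have "\<dots> = ennreal (beta c v ?i) + ennreal ?S"
    using nonneg by (simp add: beta_def ennreal_plus add_ac)
  also have "ennreal ?S = (\<Sum>j<n. ennreal (c j) * of_bool (opened_untaken j x))"
    using c_pos by (subst sum_ennreal[symmetric]) (auto intro!: sum.cong simp: less_imp_le of_bool_def)
  finally show ?thesis .
qed

end

section \<open>Independent arrivals\<close>

locale balanced_stopping_arrivals = balanced_stopping +
  fixes D :: "nat \<Rightarrow> ennreal measure"
  assumes sets_D: "\<And>i. sets (D i) = sets borel"
    and prob_space_D: "\<And>i. prob_space (D i)"
    and D_atomless: "\<And>j t. j < n \<Longrightarrow> 0 \<le> t \<Longrightarrow> emeasure (D j) {ennreal t} = 0"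
    and D_weighted_cdf_le: "\<And>t. 0 \<le> t \<Longrightarrow> (\<Sum>j<n. ennreal (c j) * emeasure (D j) {..ennreal t}) \<le> ennreal t"
begin

abbreviation P :: "(nat \<Rightarrow> ennreal) measure" where
  "P \<equiv> \<Pi>\<^sub>M j\<in>{..<n}. D j"

lemma measurable_coordinate [measurable]: "j < n \<Longrightarrow> (\<lambda>x. x j) \<in> borel_measurable P"
  using measurable_component_singleton[of j "{..<n}" D] by (simp add: measurable_cong_sets[OF refl sets_D])

lemma measurable_stop_time [measurable]: "stop_time \<in> borel_measurable P"
  unfolding tau_star_def tau_box_coordinate by measurable

lemma measurable_taken_box [measurable]: "taken_box \<in> P \<rightarrow>\<^sub>M count_space UNIV"
  unfolding i_star_def
proof (rule measurable_Least, rule pred_intros_conj1')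
  fix i assume "i < n"
  then have "(\<lambda>x. max (x i) (ennreal (beta c v i))) \<in> borel_measurable P"
    by measurable
  then have "{x \<in> space P. max (x i) (ennreal (beta c v i)) = stop_time x} \<in> sets P"
    by (rule borel_measurable_eq[OF _ measurable_stop_time])
  then show "Measurable.pred P (\<lambda>x. tau_box c v (\<lambda>i x. x i) i x = stop_time x)"
    unfolding tau_box_coordinate Measurable.pred_def .
qed

lemma measurable_cdf_stop_time [measurable]: "(\<lambda>x. emeasure (D j) {..stop_time x}) \<in> borel_measurable P"
  using measurable_stop_time measurable_emeasure_atMost[OF sets_D prob_space_imp_sigma_finite[OF prob_space_D]]
  by (rule measurable_compose)

lemma pred_opened_untaken:
  assumes "j < n"
  shows "Measurable.pred P (\<lambda>x. opened_untaken j x)"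
proof -
  have [measurable]: "Measurable.pred P (\<lambda>x. x j \<le> stop_time x)"
    unfolding Measurable.pred_def using measurable_coordinate[OF assms] measurable_stop_time
    by (rule borel_measurable_le)
  show ?thesis
    by measurable
qed

lemma measurable_outcome [measurable]: "outcome \<in> P \<rightarrow>\<^sub>M count_space UNIV \<Otimes>\<^sub>M borel"
  by measurable

lemma measurable_objective: "objective n c v (\<lambda>i x. x i) \<in> borel_measurable P"
proof -
  have "(\<lambda>x. ennreal (c j) * of_bool (opened_untaken j x)) \<in> borel_measurable P"
    if "j < n" for j
  proof -
    note pred_opened_untaken[OF that, measurable]
    show ?thesis
      by measurable
  qed
  then have "(\<lambda>x. \<Sum>j<n. ennreal (c j) * of_bool (opened_untaken j x)) \<in> borel_measurable P"
    by (intro borel_measurable_sum) simp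
  moreover have "(\<lambda>x. ennreal (beta c v (taken_box x))) \<in> borel_measurable P"
    by measurable
  ultimately show ?thesis
    unfolding objective_coordinate_eq[abs_def] by (rule borel_measurable_add[rotated])
qed

text \<open>The arrivals \<open>U\<close> of box \<open>j\<close> at which \<open>j\<close> is not taken form an up-set on which the outcome
  is constant, say \<open>(i\<^sub>0, T\<^sub>0)\<close>. As \<open>U \<inter> {..T\<^sub>0} \<subseteq> {T\<^sub>0}\<close> unless \<open>U\<close> is everything, the events
  \<open>U\<close> and \<open>{..T\<^sub>0}\<close> are positively correlated under the atomless law of \<open>\<alpha>\<^sub>j\<close>.\<close>
lemma nn_integral_fibre_opened_le:
  assumes j: "j < n"
  shows "(\<integral>\<^sup>+a. indicator S (outcome (y(j := a)))
             * of_bool (a \<le> stop_time (y(j := a)) \<and> taken_box (y(j := a)) \<noteq> j) \<partial>D j)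
    \<le> (\<integral>\<^sup>+a. indicator S (outcome (y(j := a))) * emeasure (D j) {..stop_time (y(j := a))} \<partial>D j)"
    (is "(\<integral>\<^sup>+a. ?L a \<partial>D j) \<le> (\<integral>\<^sup>+a. ?R a \<partial>D j)")
proof (cases "\<exists>a0. taken_box (y(j := a0)) \<noteq> j")
  case False
  then show ?thesis
    by simp
next
  case True
  then obtain a0 where a0: "taken_box (y(j := a0)) \<noteq> j" ..
  interpret Dj: prob_space "D j"
    by (rule prob_space_D)
  define U where "U = {a. taken_box (y(j := a)) \<noteq> j}"
  define i0 where "i0 = taken_box (y(j := a0))"
  define T0 where "T0 = stop_time (y(j := a0))"
  define K where "K = (indicator S (i0, T0) :: ennreal)"
  have U: "U \<in> sets (D j)"
    using upset_in_borel[of U] not_taken_upd_mono[OF j] by (auto simp: U_def sets_D)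
  have outcome_U: "taken_box (y(j := a)) = i0" "stop_time (y(j := a)) = T0" if "a \<in> U" for a
    using stopping_upd_eq_if_not_taken[OF _ a0, of a] that by (simp_all add: U_def i0_def T0_def)
  have L: "?L a = K * indicator (U \<inter> {..T0}) a" for a
  proof (cases "a \<in> U")
    case True
    then have "taken_box (y(j := a)) \<noteq> j"
      by (simp add: U_def)
    with True show ?thesis
      by (simp add: K_def outcome_U split: split_indicator)
  qed (simp add: U_def)
  have R: "K * emeasure (D j) {..T0} * indicator U a \<le> ?R a" for a
    by (cases "a \<in> U") (simp_all add: K_def outcome_U)
  have correlated: "emeasure (D j) (U \<inter> {..T0}) \<le> emeasure (D j) {..T0} * emeasure (D j) U"
  proof (cases "U = UNIV \<or> T0 = top")
    case True
    then show ?thesis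
      using Dj.emeasure_space_1 sets_eq_imp_space_eq[OF sets_D[of j]] by (auto simp: atMost_def)
  next
    case False
    then obtain b t where b: "taken_box (y(j := b)) = j" and t: "T0 = ennreal t" "0 \<le> t"
      by (cases T0) (auto simp: U_def)
    have "emeasure (D j) (U \<inter> {..T0}) \<le> emeasure (D j) {T0}"
      using not_taken_upd_atMost_subset[OF j a0 b] by (intro emeasure_mono) (auto simp: U_def T0_def sets_D)
    also have "\<dots> = 0"
      using D_atomless[OF j t(2)] t(1) by simp
    finally show ?thesis
      by simp
  qed
  have "(\<integral>\<^sup>+a. ?L a \<partial>D j) = K * emeasure (D j) (U \<inter> {..T0})"
    unfolding L using U by (intro nn_integral_cmult_indicator) (simp add: sets_D)
  also have "\<dots> \<le> K * emeasure (D j) {..T0} * emeasure (D j) U"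
    using correlated by (simp add: mult.assoc mult_left_mono)
  also have "\<dots> = (\<integral>\<^sup>+a. K * emeasure (D j) {..T0} * indicator U a \<partial>D j)"
    using U by (simp add: nn_integral_cmult_indicator)
  also have "\<dots> \<le> (\<integral>\<^sup>+a. ?R a \<partial>D j)"
    by (intro nn_integral_mono R)
  finally show ?thesis .
qed

lemma nn_integral_opened_le:
  assumes j: "j < n" and S [measurable]: "S \<in> sets (count_space UNIV \<Otimes>\<^sub>M borel)"
  shows "(\<integral>\<^sup>+x. indicator S (outcome x) * of_bool (opened_untaken j x) \<partial>P)
    \<le> (\<integral>\<^sup>+x. indicator S (outcome x) * emeasure (D j) {..stop_time x} \<partial>P)"
    (is "integral\<^sup>N P ?L \<le> integral\<^sup>N P ?R")
proof -
  interpret product_sigma_finite D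
    using prob_space_D by (auto simp: product_sigma_finite_def intro: prob_space_imp_sigma_finite)
  define J where "J = {..<n} - {j}"
  have n_eq: "{..<n} = insert j J" and J: "finite J" "j \<notin> J"
    using j by (auto simp: J_def)
  note pred_opened_untaken[OF j, measurable]
  have "?L \<in> borel_measurable P" "?R \<in> borel_measurable P"
    by measurable
  then have meas: "?L \<in> borel_measurable (\<Pi>\<^sub>M j\<in>insert j J. D j)" "?R \<in> borel_measurable (\<Pi>\<^sub>M j\<in>insert j J. D j)"
    unfolding n_eq .
  have "integral\<^sup>N P ?L = (\<integral>\<^sup>+y. (\<integral>\<^sup>+a. ?L (y(j := a)) \<partial>D j) \<partial>(\<Pi>\<^sub>M j\<in>J. D j))"
    unfolding n_eq by (rule product_nn_integral_insert[OF J meas(1)])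
  also have "\<dots> \<le> (\<integral>\<^sup>+y. (\<integral>\<^sup>+a. ?R (y(j := a)) \<partial>D j) \<partial>(\<Pi>\<^sub>M j\<in>J. D j))"
    by (rule nn_integral_mono) (use nn_integral_fibre_opened_le[OF j] in simp)
  also have "\<dots> = integral\<^sup>N P ?R"
    unfolding n_eq by (rule product_nn_integral_insert[OF J meas(2), symmetric])
  finally show ?thesis .
qed

lemma weighted_cdf_le: "(\<Sum>j<n. ennreal (c j) * emeasure (D j) {..t}) \<le> t"
  using D_weighted_cdf_le by (cases t) simp_all

lemma nn_integral_objective_le:
  assumes S [measurable]: "S \<in> sets (count_space UNIV \<Otimes>\<^sub>M borel)"
  shows "(\<integral>\<^sup>+x. indicator S (outcome x) * objective n c v (\<lambda>i x. x i) x \<partial>P)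
    \<le> (\<integral>\<^sup>+x. indicator S (outcome x) * (stop_time x + ennreal (beta c v (taken_box x))) \<partial>P)"
proof -
  let ?I = "\<lambda>x. indicator S (outcome x) :: ennreal"
  let ?B = "\<lambda>x. ?I x * ennreal (beta c v (taken_box x))"
  let ?O = "\<lambda>j x. ?I x * of_bool (opened_untaken j x)"
  let ?F = "\<lambda>j x. ?I x * emeasure (D j) {..stop_time x}"
  have meas_O: "?O j \<in> borel_measurable P" if "j < n" for j
  proof -
    note pred_opened_untaken[OF that, measurable]
    show ?thesis
      by measurable
  qed
  have "(\<integral>\<^sup>+x. ?I x * objective n c v (\<lambda>i x. x i) x \<partial>P) = (\<integral>\<^sup>+x. ?B x + (\<Sum>j<n. ennreal (c j) * ?O j x) \<partial>P)"
    by (simp only: objective_coordinate_eq distrib_left sum_distrib_left mult.left_commute)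
  also have "\<dots> = (\<integral>\<^sup>+x. ?B x \<partial>P) + (\<Sum>j<n. ennreal (c j) * integral\<^sup>N P (?O j))"
    by (rule nn_integral_weighted_sum[OF meas_O]) measurable
  also have "\<dots> \<le> (\<integral>\<^sup>+x. ?B x \<partial>P) + (\<Sum>j<n. ennreal (c j) * integral\<^sup>N P (?F j))"
    by (intro add_left_mono sum_mono mult_left_mono nn_integral_opened_le S) simp_all
  also have "\<dots> = (\<integral>\<^sup>+x. ?B x + (\<Sum>j<n. ennreal (c j) * ?F j x) \<partial>P)"
    by (rule nn_integral_weighted_sum[symmetric]) measurable
  also have "\<dots> \<le> (\<integral>\<^sup>+x. ?I x * (stop_time x + ennreal (beta c v (taken_box x))) \<partial>P)"
  proof (rule nn_integral_mono)
    fix x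
    have "(\<Sum>j<n. ennreal (c j) * ?F j x) = ?I x * (\<Sum>j<n. ennreal (c j) * emeasure (D j) {..stop_time x})"
      by (simp add: sum_distrib_left mult.left_commute)
    also have "\<dots> \<le> ?I x * stop_time x"
      by (intro mult_left_mono weighted_cdf_le) simp
    finally show "?B x + (\<Sum>j<n. ennreal (c j) * ?F j x) \<le> ?I x * (stop_time x + ennreal (beta c v (taken_box x)))"
      by (simp add: distrib_left add.commute add_left_mono)
  qed
  finally show ?thesis .
qed

lemma AE_nn_cond_exp_objective_le:
  assumes "prob_space M" and \<alpha>: "\<And>i. i < n \<Longrightarrow> \<alpha> i \<in> borel_measurable M"
    and "prob_space.indep_vars M (\<lambda>_. borel) \<alpha> {..<n}" and laws: "\<And>i. i < n \<Longrightarrow> D i = distr M borel (\<alpha> i)"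
  shows "AE \<omega> in M.
           nn_cond_exp M
             (vimage_algebra (space M) (\<lambda>\<omega>. (i_star n c v \<alpha> \<omega>, tau_star n c v \<alpha> \<omega>))
                (count_space UNIV \<Otimes>\<^sub>M borel))
             (objective n c v \<alpha>) \<omega>
           \<le> tau_star n c v \<alpha> \<omega> + ennreal (beta c v (i_star n c v \<alpha> \<omega>))"
proof -
  interpret prob_space M by fact
  define A where "A \<omega> = (\<lambda>i\<in>{..<n}. \<alpha> i \<omega>)" for \<omega>
  have A: "A \<in> M \<rightarrow>\<^sub>M P"
    unfolding A_def using \<alpha> laws by (intro measurable_restrict) (simp add: measurable_cong_sets[OF refl sets_D])
  have law_A: "distr M P A = P"
    unfolding A_def using n_pos \<alpha> assms(3) laws by (intro distr_indep_vars_eq_PiM) auto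
  have box_A: "tau_box c v \<alpha> k \<omega> = tau_box c v (\<lambda>i x. x i) k (A \<omega>)" if "k < n" for k \<omega>
    using that by (simp add: tau_box_def A_def)
  have obj: "objective n c v \<alpha> = (\<lambda>\<omega>. objective n c v (\<lambda>i x. x i) (A \<omega>))"
    by (intro ext objective_cong) (simp add: A_def)
  have taken: "i_star n c v \<alpha> \<omega> = taken_box (A \<omega>)" for \<omega>
    by (rule i_star_cong) (rule box_A)
  have stop: "tau_star n c v \<alpha> \<omega> = stop_time (A \<omega>)" for \<omega>
    by (rule tau_star_cong) (rule box_A)
  have "AE \<omega> in M. nn_cond_exp M (vimage_algebra (space M) (\<lambda>\<omega>. outcome (A \<omega>)) (count_space UNIV \<Otimes>\<^sub>M borel))
      (\<lambda>\<omega>. objective n c v (\<lambda>i x. x i) (A \<omega>)) \<omega> \<le> (\<lambda>(i, t). t + ennreal (beta c v i)) (outcome (A \<omega>))"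
  proof (rule AE_nn_cond_exp_vimage_le[OF A measurable_outcome measurable_objective])
    show "(\<lambda>(i, t). t + ennreal (beta c v i)) \<in> borel_measurable (count_space UNIV \<Otimes>\<^sub>M borel)"
      by measurable
  qed (simp add: law_A nn_integral_objective_le)
  then show ?thesis
    unfolding obj taken stop by (simp only: prod.case)
qed

end

lemma (in prob_space) balanced_stopping_arrivals_poisson_rounding:
  assumes "0 < n" and c: "\<And>i. i < n \<Longrightarrow> 0 < c i" and "\<And>i. i < n \<Longrightarrow> 0 \<le> v i"
    and X: "gccp_feasible n c X" and \<alpha>: "\<And>i. i < n \<Longrightarrow> \<alpha> i \<in> borel_measurable M"
    and survival: "\<And>i \<tau>. i < n \<Longrightarrow> 0 \<le> \<tau> \<Longrightarrow>
      prob {\<omega> \<in> space M. ennreal \<tau> < \<alpha> i \<omega>} = exp (- cum_rate c X i \<tau>)"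
  shows "balanced_stopping_arrivals n c v (\<lambda>i. if i < n then distr M borel (\<alpha> i) else return borel 0)"
proof (intro balanced_stopping_arrivals.intro balanced_stopping.intro balanced_stopping_arrivals_axioms.intro)
  show "prob_space (if i < n then distr M borel (\<alpha> i) else return borel 0)" for i
    using \<alpha> by (simp add: prob_space_distr prob_space_return)
  show "emeasure (if j < n then distr M borel (\<alpha> j) else return borel 0) {ennreal t} = 0"
    if "j < n" "0 \<le> t" for j t
    using poisson_arrival_atomless[OF X that(1) c[OF that(1)] \<alpha>[OF that(1)] survival[OF that(1)] that(2)] that
    by simp
  show "(\<Sum>j<n. ennreal (c j) * emeasure (if j < n then distr M borel (\<alpha> j) else return borel 0) {..ennreal t})
      \<le> ennreal t" if "0 \<le> t" for t
    using poisson_arrivals_weighted_cdf_le[OF X c \<alpha> survival that] by simp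
qed (use assms(1-3) in simp_all)

theorem lemma4p6:
  fixes n :: nat and c v :: "nat \<Rightarrow> real" and X :: "nat \<Rightarrow> real \<Rightarrow> real"
    and M :: "'a measure" and \<alpha> :: "nat \<Rightarrow> 'a \<Rightarrow> ennreal"
  assumes "n > 0"
    and "\<And>i. i < n \<Longrightarrow> c i > 0"
    and "\<And>i. i < n \<Longrightarrow> v i \<ge> 0"
    and "gccp_feasible n c X"
    and "prob_space M"
    and "\<And>i. i < n \<Longrightarrow> \<alpha> i \<in> borel_measurable M"
    and "prob_space.indep_vars M (\<lambda>_. borel) \<alpha> {..<n}"
    and "\<And>i \<tau>. i < n \<Longrightarrow> \<tau> \<ge> 0 \<Longrightarrow>
           measure M {\<omega> \<in> space M. \<alpha> i \<omega> > ennreal \<tau>} = exp (- cum_rate c X i \<tau>)"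
  shows "AE \<omega> in M.
           nn_cond_exp M
             (vimage_algebra (space M) (\<lambda>\<omega>. (i_star n c v \<alpha> \<omega>, tau_star n c v \<alpha> \<omega>))
                (count_space UNIV \<Otimes>\<^sub>M borel))
             (objective n c v \<alpha>) \<omega>
           \<le> tau_star n c v \<alpha> \<omega> + ennreal (beta c v (i_star n c v \<alpha> \<omega>))"
proof -
  interpret prob_space M by fact
  define D where "D i = (if i < n then distr M borel (\<alpha> i) else return borel 0)" for i
  have laws: "D i = distr M borel (\<alpha> i)" if "i < n" for i
    using that by (simp add: D_def)
  interpret balanced_stopping_arrivals n c v D
    unfolding D_def using assms(1-4,6,8) by (rule balanced_stopping_arrivals_poisson_rounding)
  show ?thesis
    by (rule AE_nn_cond_exp_objective_le[OF assms(5-7) laws])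
qed

end
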